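(* Let $\mathfrak{g}$ be a four-dimensional real Lie algebra, oriented by a volume form $\mu\in\Lambda^4(\mathfrak{g}^* )$, and assume $\mathfrak{g}$ admits a positively oriented symplectic form, i.e. a closed 2-form $\omega$ with $\omega\wedge\omega=c\,\mu$ for some $c>0$. Then $\mathfrak{g}$ satisfies the tame-compatible property if and only if the space $B_2$ of boundary 2-vectors is negative semi-definite for the bilinear form $\Phi_\mu(u,v)=\mu(u\wedge v)$ on $\Lambda^2(\mathfrak{g})$, that is, if and only if $\mu(u\wedge u)\le 0$ for all $u\in B_2$.
   Context: The Chevalley–Eilenberg differential $d$ on forms on a Lie algebra $\mathfrak{g}$ is defined on 1-forms by $d\alpha(u,v)=-\alpha([u,v])$ and extended to all forms by the Leibniz rule. $\mathcal{Z}^2$ denotes the space of closed 2-forms ($d\alpha=0$). The space of boundary 2-vectors $B_2\subset\Lambda^2(\mathfrak{g})$ is the annihilator of $\mathcal{Z}^2$: $B_2=\{u\in\Lambda^2(\mathfrak{g}) : \alpha(u)=0 \text{ for all } \alpha\in\mathcal{Z}^2\}$. A symplectic form on $\mathfrak{g}$ is a closed non-degenerate 2-form. An almost complex structure on $\mathfrak{g}$ is a linear map $J:\mathfrak{g}\to\mathfrak{g}$ with $J^2=-1$; it induces the given orientation if for some (equivalently any) basis of the form $(v_1,Jv_1,v_2,Jv_2)$ one has $\mu(v_1,Jv_1,v_2,Jv_2)>0$. $J$ is tamed by a symplectic form $\omega$ if $\omega(u,Ju)>0$ for all $u\neq0$; $J$ is compatible with $\omega$ if it is tamed by $\omega$ and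 $\omega(Jv,Jw)=\omega(v,w)$ for all $v,w$. An oriented Lie algebra $\mathfrak{g}$ satisfies the tame-compatible property if every almost complex structure $J$ on $\mathfrak{g}$ inducing the given orientation which is tamed by some symplectic form is also compatible with some symplectic form. *)

theory Defs
  imports "HOL-Analysis.Analysis"
begin

text \<open>The four-dimensional real Lie algebra is modelled on the vector space real^4
  with a bracket given as a bilinear, antisymmetric map satisfying Jacobi.
  Every four-dimensional real Lie algebra is isomorphic to one of these.\<close>

type_synonym vec4 = "real^4"

definition lie_bracket :: "(vec4 \<Rightarrow> vec4 \<Rightarrow> vec4) \<Rightarrow> bool" where
  "lie_bracket br \<longleftrightarrow> bilinear br \<and> (\<forall>x y. br x y = - br y x)
     \<and> (\<forall>x y z. br x (br y z) + br y (br z x) + br z (br x y) = 0)"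

definition form2 :: "(vec4 \<Rightarrow> vec4 \<Rightarrow> real) \<Rightarrow> bool" where
  "form2 \<alpha> \<longleftrightarrow> bilinear \<alpha> \<and> (\<forall>x. \<alpha> x x = 0)"

text \<open>Closedness of a 2-form under the Chevalley--Eilenberg differential:
  d alpha (x,y,z) = - alpha([x,y],z) + alpha([x,z],y) - alpha([y,z],x).\<close>
definition d2 :: "(vec4 \<Rightarrow> vec4 \<Rightarrow> vec4) \<Rightarrow> (vec4 \<Rightarrow> vec4 \<Rightarrow> real) \<Rightarrow> vec4 \<Rightarrow> vec4 \<Rightarrow> vec4 \<Rightarrow> real" where
  "d2 br \<alpha> x y z = - \<alpha> (br x y) z + \<alpha> (br x z) y - \<alpha> (br y z) x"

definition closed2 :: "(vec4 \<Rightarrow> vec4 \<Rightarrow> vec4) \<Rightarrow> (vec4 \<Rightarrow> vec4 \<Rightarrow> real) \<Rightarrow> bool" where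
  "closed2 br \<alpha> \<longleftrightarrow> (\<forall>x y z. d2 br \<alpha> x y z = 0)"

definition nondegenerate2 :: "(vec4 \<Rightarrow> vec4 \<Rightarrow> real) \<Rightarrow> bool" where
  "nondegenerate2 \<omega> \<longleftrightarrow> (\<forall>v. v \<noteq> 0 \<longrightarrow> (\<exists>w. \<omega> v w \<noteq> 0))"

definition symplectic :: "(vec4 \<Rightarrow> vec4 \<Rightarrow> vec4) \<Rightarrow> (vec4 \<Rightarrow> vec4 \<Rightarrow> real) \<Rightarrow> bool" where
  "symplectic br \<omega> \<longleftrightarrow> form2 \<omega> \<and> closed2 br \<omega> \<and> nondegenerate2 \<omega>"

definition form4 :: "(vec4 \<Rightarrow> vec4 \<Rightarrow> vec4 \<Rightarrow> vec4 \<Rightarrow> real) \<Rightarrow> bool" where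
  "form4 \<mu> \<longleftrightarrow>
     (\<forall>b c d. linear (\<lambda>a. \<mu> a b c d)) \<and> (\<forall>a c d. linear (\<lambda>b. \<mu> a b c d)) \<and>
     (\<forall>a b d. linear (\<lambda>c. \<mu> a b c d)) \<and> (\<forall>a b c. linear (\<lambda>d. \<mu> a b c d)) \<and>
     (\<forall>a b c d. (a = b \<or> a = c \<or> a = d \<or> b = c \<or> b = d \<or> c = d) \<longrightarrow> \<mu> a b c d = 0)"

definition volume_form :: "(vec4 \<Rightarrow> vec4 \<Rightarrow> vec4 \<Rightarrow> vec4 \<Rightarrow> real) \<Rightarrow> bool" where
  "volume_form \<mu> \<longleftrightarrow> form4 \<mu> \<and> (\<exists>a b c d. \<mu> a b c d \<noteq> 0)"

definition wedge22 :: "(vec4 \<Rightarrow> vec4 \<Rightarrow> real) \<Rightarrow> (vec4 \<Rightarrow> vec4 \<Rightarrow> real) \<Rightarrow> vec4 \<Rightarrow> vec4 \<Rightarrow> vec4 \<Rightarrow> vec4 \<Rightarrow> real" where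
  "wedge22 \<alpha> \<beta> v1 v2 v3 v4 =
      \<alpha> v1 v2 * \<beta> v3 v4 - \<alpha> v1 v3 * \<beta> v2 v4 + \<alpha> v1 v4 * \<beta> v2 v3
    + \<alpha> v3 v4 * \<beta> v1 v2 - \<alpha> v2 v4 * \<beta> v1 v3 + \<alpha> v2 v3 * \<beta> v1 v4"

definition positively_oriented_symplectic ::
  "(vec4 \<Rightarrow> vec4 \<Rightarrow> vec4) \<Rightarrow> (vec4 \<Rightarrow> vec4 \<Rightarrow> vec4 \<Rightarrow> vec4 \<Rightarrow> real) \<Rightarrow> (vec4 \<Rightarrow> vec4 \<Rightarrow> real) \<Rightarrow> bool" where
  "positively_oriented_symplectic br \<mu> \<omega> \<longleftrightarrow> symplectic br \<omega> \<and>
     (\<exists>c>0. \<forall>v1 v2 v3 v4. wedge22 \<omega> \<omega> v1 v2 v3 v4 = c * \<mu> v1 v2 v3 v4)"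

definition almost_complex :: "(vec4 \<Rightarrow> vec4) \<Rightarrow> bool" where
  "almost_complex J \<longleftrightarrow> linear J \<and> (\<forall>v. J (J v) = - v)"

definition induces_orientation :: "(vec4 \<Rightarrow> vec4 \<Rightarrow> vec4 \<Rightarrow> vec4 \<Rightarrow> real) \<Rightarrow> (vec4 \<Rightarrow> vec4) \<Rightarrow> bool" where
  "induces_orientation \<mu> J \<longleftrightarrow>
     (\<exists>v1 v2. independent {v1, J v1, v2, J v2} \<and> card {v1, J v1, v2, J v2} = 4
            \<and> \<mu> v1 (J v1) v2 (J v2) > 0)"

definition tamed :: "(vec4 \<Rightarrow> vec4 \<Rightarrow> real) \<Rightarrow> (vec4 \<Rightarrow> vec4) \<Rightarrow> bool" where
  "tamed \<omega> J \<longleftrightarrow> (\<forall>u. u \<noteq> 0 \<longrightarrow> \<omega> u (J u) > 0)"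

definition compatible :: "(vec4 \<Rightarrow> vec4 \<Rightarrow> real) \<Rightarrow> (vec4 \<Rightarrow> vec4) \<Rightarrow> bool" where
  "compatible \<omega> J \<longleftrightarrow> tamed \<omega> J \<and> (\<forall>v w. \<omega> (J v) (J w) = \<omega> v w)"

definition tame_compatible ::
  "(vec4 \<Rightarrow> vec4 \<Rightarrow> vec4) \<Rightarrow> (vec4 \<Rightarrow> vec4 \<Rightarrow> vec4 \<Rightarrow> vec4 \<Rightarrow> real) \<Rightarrow> bool" where
  "tame_compatible br \<mu> \<longleftrightarrow>
     (\<forall>J. almost_complex J \<and> induces_orientation \<mu> J \<and> (\<exists>\<omega>. symplectic br \<omega> \<and> tamed \<omega> J)
          \<longrightarrow> (\<exists>\<omega>. symplectic br \<omega> \<and> compatible \<omega> J))"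

text \<open>2-vectors: every element of Lambda^2(g) is a finite sum of decomposables
  a_1 /\ b_1 + ... + a_k /\ b_k; we represent it by the list of pairs (a_i,b_i).
  All quantities below only depend on the represented 2-vector.\<close>
type_synonym twovec = "(vec4 \<times> vec4) list"

definition pair2 :: "(vec4 \<Rightarrow> vec4 \<Rightarrow> real) \<Rightarrow> twovec \<Rightarrow> real" where
  "pair2 \<alpha> u = (\<Sum>(a,b)\<leftarrow>u. \<alpha> a b)"

definition boundary2 :: "(vec4 \<Rightarrow> vec4 \<Rightarrow> vec4) \<Rightarrow> twovec \<Rightarrow> bool" where
  "boundary2 br u \<longleftrightarrow> (\<forall>\<alpha>. form2 \<alpha> \<and> closed2 br \<alpha> \<longrightarrow> pair2 \<alpha> u = 0)"

definition Phi :: "(vec4 \<Rightarrow> vec4 \<Rightarrow> vec4 \<Rightarrow> vec4 \<Rightarrow> real) \<Rightarrow> twovec \<Rightarrow> twovec \<Rightarrow> real" where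
  "Phi \<mu> u v = (\<Sum>(a,b)\<leftarrow>u. \<Sum>(c,d)\<leftarrow>v. \<mu> a b c d)"

end

theory Submission
  imports Defs
begin

text \<open>
  The contraction \<open>\<iota>\<^sub>u \<mu> = \<mu>(u \<and> \<cdot> \<and> \<cdot>)\<close> turns a 2-vector \<open>u\<close> into a 2-form with
  \<open>(\<iota>\<^sub>u \<mu>)(v) = \<Phi>\<^sub>\<mu>(u, v)\<close> and \<open>\<alpha> \<and> \<iota>\<^sub>u \<mu> = \<alpha>(u) \<mu>\<close>.

  If \<open>u \<in> B\<^sub>2\<close> has \<open>\<Phi>\<^sub>\<mu>(u, u) > 0\<close>, then \<open>\<omega> \<and> \<iota>\<^sub>u \<mu> = \<omega>(u) \<mu> = 0\<close> and the Pfaffians of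
  \<open>\<omega>\<close> and \<open>\<iota>\<^sub>u \<mu>\<close> have the same sign, so \<open>\<iota>\<^sub>u \<mu> = \<kappa> \<omega>(I \<cdot>, \<cdot>)\<close> with \<open>I\<^sup>2 = -1\<close> and
  \<open>\<kappa> > 0\<close>. In a Darboux basis of \<open>\<omega>\<close> adapted to \<open>I\<close>, \<open>u\<close> is a positive multiple of
  \<open>e\<^sub>2 \<and> e\<^sub>4 - e\<^sub>1 \<and> e\<^sub>3\<close>, and an explicit almost complex structure \<open>J\<close> tamed by \<open>\<omega>\<close> makes
  every \<open>J\<close>-compatible form non-zero on \<open>u\<close>, whereas every closed form vanishes on \<open>u\<close>.

  Conversely, if \<open>J\<close> is tamed by a symplectic form but no closed form is \<open>J\<close>-compatible, the
  closed forms (a subspace) and the \<open>J\<close>-compatible forms (a convex cone) are separated by some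
  \<open>u \<in> B\<^sub>2\<close> that is non-negative on that cone. This forces \<open>\<Phi>\<^sub>\<mu>(u, u) \<ge> 0\<close>, with equality only
  for \<open>J\<close>-invariant \<open>u\<close>; such a \<open>u\<close> is positive on the open cone of coefficients of tamed
  \<open>J\<close>-invariant forms unless \<open>u = 0\<close>, and the closed tamed form \<open>\<omega>\<close> lies in that cone.
\<close>

lemma form2_antisym:
  assumes "form2 \<alpha>" shows "\<alpha> y x = - \<alpha> x y"
proof -
  have b: "bilinear \<alpha>" and z: "\<And>x. \<alpha> x x = 0" using assms unfolding form2_def by auto
  have "\<alpha> (x + y) (x + y) = 0" using z by simp
  hence "\<alpha> x x + \<alpha> x y + \<alpha> y x + \<alpha> y y = 0"
    using bilinear_ladd[OF b] bilinear_radd[OF b] by (simp add: algebra_simps)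
  thus ?thesis using z by simp
qed

lemma form2_arith:
  assumes "form2 \<alpha>"
  shows "\<alpha> (x + y) z = \<alpha> x z + \<alpha> y z" "\<alpha> z (x + y) = \<alpha> z x + \<alpha> z y"
    "\<alpha> (k *\<^sub>R x) z = k * \<alpha> x z" "\<alpha> z (k *\<^sub>R x) = k * \<alpha> z x"
    "\<alpha> (- x) z = - \<alpha> x z" "\<alpha> z (- x) = - \<alpha> z x"
    "\<alpha> (x - y) z = \<alpha> x z - \<alpha> y z" "\<alpha> z (x - y) = \<alpha> z x - \<alpha> z y"
    "\<alpha> 0 z = 0" "\<alpha> z 0 = 0" "\<alpha> x x = 0"
  using assms unfolding form2_def
  by (simp_all add: bilinear_ladd bilinear_radd bilinear_lmul bilinear_rmul bilinear_lneg
      bilinear_rneg bilinear_lsub bilinear_rsub bilinear_lzero bilinear_rzero)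

lemma form2_zero: "form2 (\<lambda>x y. 0)"
  unfolding form2_def bilinear_def by (simp add: linear_zero)

lemma form2_lincomb:
  assumes "form2 \<alpha>" "form2 \<beta>"
  shows "form2 (\<lambda>x y. s * \<alpha> x y + t * \<beta> x y)"
  unfolding form2_def bilinear_def
  by (intro conjI allI linearI) (simp_all add: form2_arith[OF assms(1)] form2_arith[OF assms(2)] algebra_simps)

lemma closed2_lincomb:
  assumes "closed2 br \<alpha>" "closed2 br \<beta>"
  shows "closed2 br (\<lambda>x y. s * \<alpha> x y + t * \<beta> x y)"
proof -
  have "d2 br (\<lambda>x y. s * \<alpha> x y + t * \<beta> x y) x y z = s * d2 br \<alpha> x y z + t * d2 br \<beta> x y z"
    for x y z
    unfolding d2_def by (simp add: algebra_simps)
  then show ?thesis using assms unfolding closed2_def by simp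
qed

lemma nondegenerate2_if_tamed:
  assumes "tamed \<omega> J" shows "nondegenerate2 \<omega>"
  unfolding nondegenerate2_def
proof (intro allI impI)
  fix v :: vec4 assume "v \<noteq> 0"
  hence "\<omega> v (J v) \<noteq> 0" using assms unfolding tamed_def by force
  thus "\<exists>w. \<omega> v w \<noteq> 0" by blast
qed

lemma form4_linear:
  assumes "form4 \<mu>"
  shows "linear (\<lambda>a. \<mu> a b c d)" "linear (\<lambda>b. \<mu> a b c d)"
    "linear (\<lambda>c. \<mu> a b c d)" "linear (\<lambda>d. \<mu> a b c d)"
  using assms unfolding form4_def by simp_all

lemma form4_slices:
  assumes "form4 \<mu>"
  shows "form2 (\<lambda>a b. \<mu> a b c d)" "form2 (\<lambda>b c. \<mu> a b c d)" "form2 (\<lambda>c d. \<mu> a b c d)"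
  using assms unfolding form2_def bilinear_def form4_def by simp_all

lemma form4_swaps:
  assumes "form4 \<mu>"
  shows "\<mu> b a c d = - \<mu> a b c d" "\<mu> a c b d = - \<mu> a b c d" "\<mu> a b d c = - \<mu> a b c d"
  using form2_antisym[OF form4_slices(1)[OF assms, of c d], of b a]
    form2_antisym[OF form4_slices(2)[OF assms, of a d], of c b]
    form2_antisym[OF form4_slices(3)[OF assms, of a b], of d c]
  by simp_all

lemma form4_perms:
  assumes "form4 \<mu>"
  shows "\<mu> c d a b = \<mu> a b c d" "\<mu> b d a c = - \<mu> a b c d"
    "\<mu> a d b c = \<mu> a b c d" "\<mu> b c a d = \<mu> a b c d"
  using form4_swaps[OF assms] by metis+

definition plucker :: "(vec4 \<Rightarrow> real) \<Rightarrow> (vec4 \<Rightarrow> real) \<Rightarrow> twovec \<Rightarrow> real" where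
  "plucker ci cj u = (\<Sum>(a, b)\<leftarrow>u. ci a * cj b - cj a * ci b)"

lemma plucker_simps [simp]:
  "plucker ci cj [] = 0" "plucker ci cj ((a, b) # u) = (ci a * cj b - cj a * ci b) + plucker ci cj u"
  by (simp_all add: plucker_def)

lemma pair2_simps [simp]:
  "pair2 \<alpha> [] = 0" "pair2 \<alpha> ((a, b) # u) = \<alpha> a b + pair2 \<alpha> u"
  by (simp_all add: pair2_def)

definition contract :: "(vec4 \<Rightarrow> vec4 \<Rightarrow> vec4 \<Rightarrow> vec4 \<Rightarrow> real) \<Rightarrow> twovec \<Rightarrow> vec4 \<Rightarrow> vec4 \<Rightarrow> real" where
  "contract \<mu> u x y = pair2 (\<lambda>a b. \<mu> a b x y) u"

lemma form2_contract: assumes "form4 \<mu>" shows "form2 (contract \<mu> u)"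
proof (induction u)
  case Nil
  show ?case unfolding contract_def by (simp add: form2_zero)
next
  case (Cons p u)
  obtain a b where "p = (a, b)" by force
  then show ?case
    using form2_lincomb[OF form4_slices(3)[OF assms] Cons, of 1 a b 1]
    by (simp add: contract_def)
qed

lemma pair2_contract: "pair2 (contract \<mu> u) v = Phi \<mu> u v"
proof (induction u)
  case Nil
  show ?case by (induction v) (auto simp: contract_def Phi_def)
next
  case (Cons p u)
  obtain a b where p: "p = (a, b)" by force
  have "pair2 (\<lambda>x y. \<mu> a b x y + contract \<mu> u x y) v = pair2 (\<mu> a b) v + pair2 (contract \<mu> u) v"
    by (induction v) auto
  then show ?case using Cons by (simp add: p contract_def Phi_def pair2_def)
qed

lemma independent4I:
  fixes b1 b2 b3 b4 :: vec4
  assumes H: "\<And>u1 u2 u3 u4. u1 *\<^sub>R b1 + u2 *\<^sub>R b2 + u3 *\<^sub>R b3 + u4 *\<^sub>R b4 = 0 \<Longrightarrow>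
      u1 = 0 \<and> u2 = 0 \<and> u3 = 0 \<and> u4 = 0"
  shows "independent {b1, b2, b3, b4}" "card {b1, b2, b3, b4} = 4"
proof -
  have d: "b1 \<noteq> b2" "b1 \<noteq> b3" "b1 \<noteq> b4" "b2 \<noteq> b3" "b2 \<noteq> b4" "b3 \<noteq> b4"
    using H[of 1 "-1" 0 0] H[of 1 0 "-1" 0] H[of 1 0 0 "-1"] H[of 0 1 "-1" 0] H[of 0 1 0 "-1"]
      H[of 0 0 1 "-1"] by auto
  then show "card {b1, b2, b3, b4} = 4" by simp
  show "independent {b1, b2, b3, b4}"
  proof
    assume "dependent {b1, b2, b3, b4}"
    then obtain u where u: "\<exists>v\<in>{b1, b2, b3, b4}. u v \<noteq> 0"
      and s: "(\<Sum>v\<in>{b1, b2, b3, b4}. u v *\<^sub>R v) = 0"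
      using dependent_finite[of "{b1, b2, b3, b4}"] by auto
    have "u b1 *\<^sub>R b1 + u b2 *\<^sub>R b2 + u b3 *\<^sub>R b3 + u b4 *\<^sub>R b4 = 0"
      using s d by (simp add: add.assoc)
    from H[OF this] u show False by auto
  qed
qed

locale frame4 =
  fixes e1 e2 e3 e4 :: vec4 and c1 c2 c3 c4 :: "vec4 \<Rightarrow> real"
  assumes coord_linear: "linear c1" "linear c2" "linear c3" "linear c4"
    and frame_decomp: "\<And>x. x = c1 x *\<^sub>R e1 + c2 x *\<^sub>R e2 + c3 x *\<^sub>R e3 + c4 x *\<^sub>R e4"
    and coord_frame [simp]:
      "c1 e1 = 1" "c2 e1 = 0" "c3 e1 = 0" "c4 e1 = 0"
      "c1 e2 = 0" "c2 e2 = 1" "c3 e2 = 0" "c4 e2 = 0"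
      "c1 e3 = 0" "c2 e3 = 0" "c3 e3 = 1" "c4 e3 = 0"
      "c1 e4 = 0" "c2 e4 = 0" "c3 e4 = 0" "c4 e4 = 1"
begin

lemmas coord_arith [simp] =
  linear_add[OF coord_linear(1)] linear_scale[OF coord_linear(1)] linear_neg[OF coord_linear(1)]
  linear_diff[OF coord_linear(1)] linear_0[OF coord_linear(1)]
  linear_add[OF coord_linear(2)] linear_scale[OF coord_linear(2)] linear_neg[OF coord_linear(2)]
  linear_diff[OF coord_linear(2)] linear_0[OF coord_linear(2)]
  linear_add[OF coord_linear(3)] linear_scale[OF coord_linear(3)] linear_neg[OF coord_linear(3)]
  linear_diff[OF coord_linear(3)] linear_0[OF coord_linear(3)]
  linear_add[OF coord_linear(4)] linear_scale[OF coord_linear(4)] linear_neg[OF coord_linear(4)]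
  linear_diff[OF coord_linear(4)] linear_0[OF coord_linear(4)]

lemma frame_eq_0_iff: "x = 0 \<longleftrightarrow> c1 x = 0 \<and> c2 x = 0 \<and> c3 x = 0 \<and> c4 x = 0"
  using frame_decomp[of x] by (metis coord_arith(5,10,15,20) scale_zero_left add_0)

lemma form2_frame_expand:
  assumes f: "form2 \<alpha>"
  shows "\<alpha> x y = (c1 x * c2 y - c2 x * c1 y) * \<alpha> e1 e2 + (c1 x * c3 y - c3 x * c1 y) * \<alpha> e1 e3
    + (c1 x * c4 y - c4 x * c1 y) * \<alpha> e1 e4 + (c2 x * c3 y - c3 x * c2 y) * \<alpha> e2 e3
    + (c2 x * c4 y - c4 x * c2 y) * \<alpha> e2 e4 + (c3 x * c4 y - c4 x * c3 y) * \<alpha> e3 e4"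
proof -
  have a: "\<alpha> e2 e1 = - \<alpha> e1 e2" "\<alpha> e3 e1 = - \<alpha> e1 e3" "\<alpha> e4 e1 = - \<alpha> e1 e4"
    "\<alpha> e3 e2 = - \<alpha> e2 e3" "\<alpha> e4 e2 = - \<alpha> e2 e4" "\<alpha> e4 e3 = - \<alpha> e3 e4"
    by (rule form2_antisym[OF f])+
  have "\<alpha> x y = \<alpha> (c1 x *\<^sub>R e1 + c2 x *\<^sub>R e2 + c3 x *\<^sub>R e3 + c4 x *\<^sub>R e4)
      (c1 y *\<^sub>R e1 + c2 y *\<^sub>R e2 + c3 y *\<^sub>R e3 + c4 y *\<^sub>R e4)"
    using frame_decomp[of x] frame_decomp[of y] by simp
  then show ?thesis
    by (simp add: form2_arith[OF f] a algebra_simps)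
qed

lemma form2_frame_eqI:
  assumes "form2 \<alpha>" "form2 \<beta>"
    and "\<alpha> e1 e2 = \<beta> e1 e2" "\<alpha> e1 e3 = \<beta> e1 e3" "\<alpha> e1 e4 = \<beta> e1 e4"
      "\<alpha> e2 e3 = \<beta> e2 e3" "\<alpha> e2 e4 = \<beta> e2 e4" "\<alpha> e3 e4 = \<beta> e3 e4"
  shows "\<alpha> = \<beta>"
proof (intro ext)
  fix x y
  show "\<alpha> x y = \<beta> x y"
    by (subst form2_frame_expand[OF assms(1)], subst form2_frame_expand[OF assms(2)]) (simp add: assms(3-))
qed

lemma pair2_frame_expand:
  assumes f: "form2 \<alpha>"
  shows "pair2 \<alpha> u = plucker c1 c2 u * \<alpha> e1 e2 + plucker c1 c3 u * \<alpha> e1 e3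
    + plucker c1 c4 u * \<alpha> e1 e4 + plucker c2 c3 u * \<alpha> e2 e3
    + plucker c2 c4 u * \<alpha> e2 e4 + plucker c3 c4 u * \<alpha> e3 e4"
proof (induction u)
  case Nil
  then show ?case by simp
next
  case (Cons p u)
  obtain a b where "p = (a, b)" by force
  then show ?case using Cons form2_frame_expand[OF f, of a b] by (simp add: algebra_simps)
qed

lemma contract_frame:
  assumes m4: "form4 \<mu>"
  defines "m \<equiv> \<mu> e1 e2 e3 e4"
  shows "contract \<mu> u e1 e2 = m * plucker c3 c4 u" "contract \<mu> u e1 e3 = - m * plucker c2 c4 u"
    "contract \<mu> u e1 e4 = m * plucker c2 c3 u" "contract \<mu> u e2 e3 = m * plucker c1 c4 u"
    "contract \<mu> u e2 e4 = - m * plucker c1 c3 u" "contract \<mu> u e3 e4 = m * plucker c1 c2 u"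
proof -
  have P: "\<mu> e3 e4 e1 e2 = m" "\<mu> e2 e4 e1 e3 = - m" "\<mu> e2 e3 e1 e4 = m"
    "\<mu> e1 e4 e2 e3 = m" "\<mu> e1 e3 e2 e4 = - m"
    unfolding m_def by (fact form4_perms[OF m4] form4_swaps(2)[OF m4])+
  have Z: "\<mu> a a c d = 0" "\<mu> a b b d = 0" "\<mu> a b c c = 0" "\<mu> a b a d = 0" "\<mu> a b c a = 0"
    "\<mu> a b c b = 0" for a b c d
    using m4 unfolding form4_def by simp_all
  note E = pair2_frame_expand[OF form4_slices(1)[OF m4]]
  show "contract \<mu> u e1 e2 = m * plucker c3 c4 u" "contract \<mu> u e1 e3 = - m * plucker c2 c4 u"
    "contract \<mu> u e1 e4 = m * plucker c2 c3 u" "contract \<mu> u e2 e3 = m * plucker c1 c4 u"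
    "contract \<mu> u e2 e4 = - m * plucker c1 c3 u" "contract \<mu> u e3 e4 = m * plucker c1 c2 u"
    unfolding contract_def E by (simp_all add: Z P m_def)
qed

lemma wedge_contract:
  assumes "form4 \<mu>" "form2 \<alpha>"
  shows "wedge22 \<alpha> (contract \<mu> u) e1 e2 e3 e4 = \<mu> e1 e2 e3 e4 * pair2 \<alpha> u"
  unfolding wedge22_def contract_frame[OF assms(1)] pair2_frame_expand[OF assms(2)]
  by (simp add: algebra_simps)

lemma Phi_frame_expand:
  assumes "form4 \<mu>"
  shows "Phi \<mu> u v = \<mu> e1 e2 e3 e4 * (plucker c1 c2 v * plucker c3 c4 u
    - plucker c1 c3 v * plucker c2 c4 u + plucker c1 c4 v * plucker c2 c3 u
    + plucker c2 c3 v * plucker c1 c4 u - plucker c2 c4 v * plucker c1 c3 u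
    + plucker c3 c4 v * plucker c1 c2 u)"
  unfolding pair2_contract[symmetric] pair2_frame_expand[OF form2_contract[OF assms]]
    contract_frame[OF assms]
  by (simp add: algebra_simps)

end

lemma vector_4_nth [simp]:
  "(vector [a, b, c, d] :: 'a::zero^4) $ 1 = a" "(vector [a, b, c, d] :: 'a::zero^4) $ 2 = b"
  "(vector [a, b, c, d] :: 'a::zero^4) $ 3 = c" "(vector [a, b, c, d] :: 'a::zero^4) $ 4 = d"
  by (simp_all add: vector_def)

lemma independent_imp_frame4:
  fixes e1 e2 e3 e4 :: vec4
  assumes ind: "independent {e1, e2, e3, e4}" and card: "card {e1, e2, e3, e4} = 4"
  shows "\<exists>c1 c2 c3 c4. frame4 e1 e2 e3 e4 c1 c2 c3 c4"
proof -
  define T where "T = (\<lambda>c::real^4. c$1 *\<^sub>R e1 + c$2 *\<^sub>R e2 + c$3 *\<^sub>R e3 + c$4 *\<^sub>R e4)"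
  have linT: "linear T" unfolding T_def
    by (auto intro!: linearI simp: algebra_simps)
  have sp: "UNIV \<subseteq> span {e1, e2, e3, e4}"
    using card_eq_dim[of "{e1, e2, e3, e4}" UNIV] ind card by simp
  have dist: "e1 \<noteq> e2" "e1 \<noteq> e3" "e1 \<noteq> e4" "e2 \<noteq> e3" "e2 \<noteq> e4" "e3 \<noteq> e4"
    using card by (auto simp: card_insert_if split: if_splits)
  have "x \<in> range T" for x
  proof -
    obtain u where "x = (\<Sum>v\<in>{e1, e2, e3, e4}. u v *\<^sub>R v)"
      using sp span_finite[of "{e1, e2, e3, e4}"] by auto
    hence "x = T (vector [u e1, u e2, u e3, u e4])"
      using dist unfolding T_def by (simp add: add.assoc)
    thus ?thesis by blast
  qed
  hence surjT: "surj T" by auto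
  have injT: "inj T" using linear_surjective_imp_injective[OF linT surjT] by simp
  obtain g where lg: "linear g" and gT: "T \<circ> g = id"
    using linear_surjective_right_inverse[OF linT surjT] by blast
  have Tg: "T (g x) = x" for x using gT by (metis comp_apply id_apply)
  have gT: "g (T c) = c" for c using injT Tg by (metis injD)
  have "g e1 = vector [1, 0, 0, 0]" "g e2 = vector [0, 1, 0, 0]"
    "g e3 = vector [0, 0, 1, 0]" "g e4 = vector [0, 0, 0, 1]"
    using gT[of "vector [1, 0, 0, 0]"] gT[of "vector [0, 1, 0, 0]"] gT[of "vector [0, 0, 1, 0]"]
      gT[of "vector [0, 0, 0, 1]"] unfolding T_def by simp_all
  moreover have "linear (\<lambda>x. g x $ i)" for i
    using lg by (auto intro!: linearI simp: linear_add linear_scale)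
  ultimately have "frame4 e1 e2 e3 e4 (\<lambda>x. g x $ 1) (\<lambda>x. g x $ 2) (\<lambda>x. g x $ 3) (\<lambda>x. g x $ 4)"
    using Tg unfolding frame4_def T_def by simp
  thus ?thesis by blast
qed

abbreviation std :: "4 \<Rightarrow> vec4" where "std i \<equiv> axis i 1"

lemma std_frame:
  "frame4 (std 1) (std 2) (std 3) (std 4) (\<lambda>x. x$1) (\<lambda>x. x$2) (\<lambda>x. x$3) (\<lambda>x. x$4)"
  unfolding frame4_def
  by (simp add: bounded_linear.linear[OF bounded_linear_vec_nth] vec_eq_iff forall_4 axis_def)

text \<open>The matrix of \<open>Pf(\<omega>) \<omega>\<^sup>-\<^sup>1 w\<close> in standard coordinates, where \<open>a, \<dots>, f\<close> and
  \<open>W12, \<dots>, W34\<close> are the coefficients of \<open>\<omega>\<close> and \<open>w\<close> (an adjugate matrix).\<close>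
definition pf_adjoint ::
  "real \<Rightarrow> real \<Rightarrow> real \<Rightarrow> real \<Rightarrow> real \<Rightarrow> real \<Rightarrow> real \<Rightarrow> real \<Rightarrow> real \<Rightarrow> real \<Rightarrow> real \<Rightarrow> real \<Rightarrow> vec4 \<Rightarrow> vec4"
  where "pf_adjoint a b c d e f W12 W13 W14 W23 W24 W34 x = vector [
    (f*W12 - e*W13 + d*W14) * x$1 + (- e*W23 + d*W24) * x$2 + (- f*W23 + d*W34) * x$3 + (- f*W24 + e*W34) * x$4,
    (c*W13 - b*W14) * x$1 + (f*W12 + c*W23 - b*W24) * x$2 + (f*W13 - b*W34) * x$3 + (f*W14 - c*W34) * x$4,
    (- c*W12 + a*W14) * x$1 + (- e*W12 + a*W24) * x$2 + (- e*W13 + c*W23 + a*W34) * x$3 + (- e*W14 + c*W24) * x$4,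
    (b*W12 - a*W13) * x$1 + (d*W12 - a*W23) * x$2 + (d*W13 - b*W23) * x$3 + (d*W14 - b*W24 + a*W34) * x$4]"

lemma pfaffian_adjoint_exists:
  assumes f\<omega>: "form2 \<omega>" and fw: "form2 w"
    and orth: "wedge22 \<omega> w (std 1) (std 2) (std 3) (std 4) = 0"
  defines "P \<alpha> \<equiv> wedge22 \<alpha> \<alpha> (std 1) (std 2) (std 3) (std 4)"
  shows "\<exists>M. linear M \<and> (\<forall>x y. \<omega> (M x) y = P \<omega> * w x y) \<and> (\<forall>x. M (M x) = - (P \<omega> * P w) *\<^sub>R x)"
proof -
  interpret std: frame4 "std 1" "std 2" "std 3" "std 4" "\<lambda>x. x$1" "\<lambda>x. x$2" "\<lambda>x. x$3" "\<lambda>x. x$4"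
    by (rule std_frame)
  define a where "a = \<omega> (std 1) (std 2)"
  define b where "b = \<omega> (std 1) (std 3)"
  define c where "c = \<omega> (std 1) (std 4)"
  define d where "d = \<omega> (std 2) (std 3)"
  define e where "e = \<omega> (std 2) (std 4)"
  define f where "f = \<omega> (std 3) (std 4)"
  define W12 where "W12 = w (std 1) (std 2)"
  define W13 where "W13 = w (std 1) (std 3)"
  define W14 where "W14 = w (std 1) (std 4)"
  define W23 where "W23 = w (std 2) (std 3)"
  define W24 where "W24 = w (std 2) (std 4)"
  define W34 where "W34 = w (std 3) (std 4)"
  define M where "M x = 2 *\<^sub>R pf_adjoint a b c d e f W12 W13 W14 W23 W24 W34 x" for x
  have P\<omega>: "P \<omega> = 2 * (a*f - b*e + c*d)" and Pw: "P w = 2 * (W12*W34 - W13*W24 + W14*W23)"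
    by (simp_all add: P_def wedge22_def a_def b_def c_def d_def e_def f_def W12_def W13_def W14_def
        W23_def W24_def W34_def)
  have H: "a*W34 + f*W12 - b*W24 - e*W13 + c*W23 + d*W14 = 0"
    using orth by (simp add: wedge22_def a_def b_def c_def d_def e_def f_def W12_def W13_def W14_def
        W23_def W24_def W34_def algebra_simps)
  have "linear M"
    unfolding M_def pf_adjoint_def by (intro linearI) (simp_all add: vec_eq_iff forall_4 algebra_simps)
  moreover have "\<omega> (M x) y = P \<omega> * w x y" for x y
    unfolding std.form2_frame_expand[OF f\<omega>, of "M x" y] std.form2_frame_expand[OF fw, of x y] P\<omega>
      a_def[symmetric] b_def[symmetric] c_def[symmetric] d_def[symmetric]
      e_def[symmetric] f_def[symmetric] W12_def[symmetric] W13_def[symmetric] W14_def[symmetric]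
      W23_def[symmetric] W24_def[symmetric] W34_def[symmetric]
    by (simp add: M_def pf_adjoint_def algebra_simps)
  moreover have "M (M x) = - (P \<omega> * P w) *\<^sub>R x" for x
  proof -
    have "M (M x) = - (P \<omega> * P w) *\<^sub>R x
        + (2 * (a*W34 + f*W12 - b*W24 - e*W13 + c*W23 + d*W14)) *\<^sub>R M x"
      unfolding P\<omega> Pw by (simp add: M_def pf_adjoint_def vec_eq_iff forall_4 algebra_simps)
    then show ?thesis using H by simp
  qed
  ultimately show ?thesis by blast
qed

lemma complex_structure_of_square:
  assumes f\<omega>: "form2 \<omega>" and lM: "linear M" and MM: "\<And>x. M (M x) = - k *\<^sub>R x" and k: "k > 0"
    and \<omega>M: "\<And>x y. \<omega> (M x) y = p * w x y" and p: "p \<noteq> 0"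
  shows "\<exists>I \<kappa>. (\<forall>x. I (I x) = - x) \<and> \<kappa> > 0 \<and> (\<forall>x y. w x y = \<kappa> * \<omega> (I x) y)"
proof -
  define s where "s = sgn p * sqrt k"
  define I where "I x = (1 / s) *\<^sub>R M x" for x
  have ss: "s * s = k" using k p by (simp add: s_def sgn_if)
  hence s: "s \<noteq> 0" using k by auto
  have "I (I x) = - x" for x
    using ss s k unfolding I_def by (simp add: linear_scale[OF lM] MM)
  moreover have "sqrt k / \<bar>p\<bar> > 0" using k p by simp
  moreover have "w x y = sqrt k / \<bar>p\<bar> * \<omega> (I x) y" for x y
  proof -
    have "M x = s *\<^sub>R I x" using s unfolding I_def by simp
    hence "p * w x y = s * \<omega> (I x) y" using \<omega>M form2_arith(3)[OF f\<omega>] by metis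
    thus ?thesis using p unfolding s_def by (simp add: sgn_if field_simps split: if_splits)
  qed
  ultimately show ?thesis by blast
qed

lemma form2_skew_complex_structure:
  assumes f\<omega>: "form2 \<omega>" and fw: "form2 w" and II: "\<And>x. I (I x) = - x"
    and wI: "\<And>x y. w x y = \<kappa> * \<omega> (I x) y" and \<kappa>: "\<kappa> > 0"
  shows "\<omega> (I x) y = \<omega> x (I y)" "\<omega> (I x) (I y) = - \<omega> x y" "\<omega> x (I x) = 0"
proof -
  have SA: "\<omega> (I x) y = \<omega> x (I y)" for x y
  proof -
    have "\<kappa> * \<omega> (I x) y = - w y x" using wI form2_antisym[OF fw, of x y] by simp
    also have "\<dots> = \<kappa> * \<omega> x (I y)" using wI form2_antisym[OF f\<omega>, of "I y" x] by simp
    finally show ?thesis using \<kappa> by simp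
  qed
  then show "\<omega> (I x) y = \<omega> x (I y)" .
  show "\<omega> (I x) (I y) = - \<omega> x y" using SA[of x "I y"] II[of y] form2_arith(6)[OF f\<omega>] by simp
  show "\<omega> x (I x) = 0" using SA[of x x] form2_antisym[OF f\<omega>, of "I x" x] by simp
qed

lemma darboux_basis_adapted:
  fixes \<omega> w :: "vec4 \<Rightarrow> vec4 \<Rightarrow> real" and I :: "vec4 \<Rightarrow> vec4"
  assumes f\<omega>: "form2 \<omega>" and nd: "nondegenerate2 \<omega>" and fw: "form2 w" and II: "\<And>x. I (I x) = - x"
    and wI: "\<And>x y. w x y = \<kappa> * \<omega> (I x) y" and \<kappa>: "\<kappa> > 0"
  shows "\<exists>b1 b2 b3 b4. \<omega> b1 b2 = 1 \<and> \<omega> b1 b3 = 0 \<and> \<omega> b1 b4 = 0 \<and> \<omega> b2 b3 = 0 \<and> \<omega> b2 b4 = 0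
     \<and> \<omega> b3 b4 = 1 \<and> w b1 b2 = 0 \<and> w b1 b3 = - \<kappa> \<and> w b1 b4 = 0 \<and> w b2 b3 = 0 \<and> w b2 b4 = \<kappa>
     \<and> w b3 b4 = 0"
proof -
  note L = form2_arith[OF f\<omega>] and as = form2_antisym[OF f\<omega>]
  note SA = form2_skew_complex_structure(1)[OF f\<omega> fw II wI \<kappa>]
    and N = form2_skew_complex_structure(2)[OF f\<omega> fw II wI \<kappa>]
    and Z = form2_skew_complex_structure(3)[OF f\<omega> fw II wI \<kappa>]
  \<comment> \<open>\<open>v, y, I y, I v\<close> is the required basis, for any \<open>v \<noteq> 0\<close> and any \<open>y\<close> with
    \<open>\<omega>(v, y) = 1\<close> and \<open>\<omega>(I v, y) = 0\<close>\<close>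
  define v :: vec4 where "v = axis 1 1"
  have "v \<noteq> 0" unfolding v_def by (simp add: axis_eq_0_iff)
  then obtain z where z: "\<omega> v z \<noteq> 0" using nd unfolding nondegenerate2_def by blast
  define p where "p = \<omega> v z"
  define q where "q = \<omega> (I v) z"
  have r: "p * p + q * q > 0" using z unfolding p_def
    by (metis add_pos_nonneg not_real_square_gt_zero zero_le_square)
  hence r0: "p * p + q * q \<noteq> 0" by linarith
  define y where "y = (1 / (p * p + q * q)) *\<^sub>R (p *\<^sub>R z + q *\<^sub>R I z)"
  have vIz: "\<omega> v (I z) = q" unfolding q_def using SA[of v z] by simp
  have IvIz: "\<omega> (I v) (I z) = - p" unfolding p_def using N by simp
  have vy: "\<omega> v y = 1" unfolding y_def using r0 by (simp add: L vIz p_def[symmetric])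
  have Ivy: "\<omega> (I v) y = 0"
    unfolding y_def using r0 by (simp add: L IvIz q_def[symmetric] algebra_simps)
  show ?thesis
  proof (intro exI conjI)
    show "\<omega> v y = 1" by (rule vy)
    show "\<omega> v (I y) = 0" using SA[of v y] Ivy by simp
    show "\<omega> v (I v) = 0" "\<omega> y (I y) = 0" by (rule Z)+
    show "\<omega> y (I v) = 0" using as[of "I v" y] Ivy by simp
    show "\<omega> (I y) (I v) = 1" using N[of y v] as[of y v] vy by simp
    show "w v y = 0" using wI Ivy by simp
    show "w v (I y) = - \<kappa>" using wI N[of v y] vy by simp
    show "w v (I v) = 0" "w y (I y) = 0" using wI N L(11) by simp_all
    show "w y (I v) = \<kappa>" using wI N[of y v] as[of y v] vy by simp
    show "w (I y) (I v) = 0" using wI II[of y] L(5)[of y "I v"] as[of "I v" y] Ivy by simp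
  qed
qed

lemma darboux_frame:
  assumes f\<omega>: "form2 \<omega>"
    and T: "\<omega> b1 b2 = 1" "\<omega> b1 b3 = 0" "\<omega> b1 b4 = 0" "\<omega> b2 b3 = 0" "\<omega> b2 b4 = 0" "\<omega> b3 b4 = 1"
  shows "\<exists>c1 c2 c3 c4. frame4 b1 b2 b3 b4 c1 c2 c3 c4"
proof -
  note L = form2_arith[OF f\<omega>]
  have "u1 = 0 \<and> u2 = 0 \<and> u3 = 0 \<and> u4 = 0"
    if h: "u1 *\<^sub>R b1 + u2 *\<^sub>R b2 + u3 *\<^sub>R b3 + u4 *\<^sub>R b4 = 0" for u1 u2 u3 u4
  proof -
    have T': "\<omega> b2 b1 = -1" "\<omega> b3 b1 = 0" "\<omega> b4 b1 = 0" "\<omega> b3 b2 = 0" "\<omega> b4 b2 = 0" "\<omega> b4 b3 = -1"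
      using T form2_antisym[OF f\<omega>, of b2 b1] form2_antisym[OF f\<omega>, of b3 b1]
        form2_antisym[OF f\<omega>, of b4 b1] form2_antisym[OF f\<omega>, of b3 b2]
        form2_antisym[OF f\<omega>, of b4 b2] form2_antisym[OF f\<omega>, of b4 b3] by simp_all
    have "\<omega> (u1 *\<^sub>R b1 + u2 *\<^sub>R b2 + u3 *\<^sub>R b3 + u4 *\<^sub>R b4) x = 0" for x
      using h L(9) by simp
    from this[of b1] this[of b2] this[of b3] this[of b4] show ?thesis
      using T T' by (simp add: L)
  qed
  then show ?thesis using independent4I independent_imp_frame4 by blast
qed

context frame4
begin

text \<open>With \<open>\<omega>\<close> in Darboux form on the frame, this complex structure is tamed by \<open>\<omega>\<close>
  (\<open>\<omega>(x, J x) = 3/5 |x|\<^sup>2\<close>), yet no \<open>J\<close>-compatible form vanishes on \<open>e1 \<and> e3 - e2 \<and> e4\<close>.\<close>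
definition tilt :: "vec4 \<Rightarrow> vec4" where
  "tilt x = (- (3/5) * c2 x + (4/5) * c3 x) *\<^sub>R e1 + ((3/5) * c1 x - (4/5) * c4 x) *\<^sub>R e2
    + (- (4/5) * c1 x - (3/5) * c4 x) *\<^sub>R e3 + ((4/5) * c2 x + (3/5) * c3 x) *\<^sub>R e4"

lemma coord_tilt [simp]:
  "c1 (tilt x) = - (3/5) * c2 x + (4/5) * c3 x" "c2 (tilt x) = (3/5) * c1 x - (4/5) * c4 x"
  "c3 (tilt x) = - (4/5) * c1 x - (3/5) * c4 x" "c4 (tilt x) = (4/5) * c2 x + (3/5) * c3 x"
  unfolding tilt_def by simp_all

lemma tilt_frame:
  "tilt e1 = (3/5) *\<^sub>R e2 - (4/5) *\<^sub>R e3" "tilt e2 = - (3/5) *\<^sub>R e1 + (4/5) *\<^sub>R e4"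
  "tilt e3 = (4/5) *\<^sub>R e1 + (3/5) *\<^sub>R e4" "tilt e4 = - (4/5) *\<^sub>R e2 - (3/5) *\<^sub>R e3"
  unfolding tilt_def by (simp_all add: algebra_simps)

lemma almost_complex_tilt: "almost_complex tilt"
proof -
  have "linear tilt" unfolding tilt_def
    by (intro linearI) (simp_all add: algebra_simps add_divide_distrib)
  moreover have "tilt (tilt x) = - x" for x
  proof -
    have "tilt (tilt x) = - (c1 x *\<^sub>R e1 + c2 x *\<^sub>R e2 + c3 x *\<^sub>R e3 + c4 x *\<^sub>R e4)"
      unfolding tilt_def[of "tilt x"] by (simp add: algebra_simps)
    then show ?thesis by (metis frame_decomp)
  qed
  ultimately show ?thesis unfolding almost_complex_def by simp
qed

lemma tamed_tilt:
  assumes f\<omega>: "form2 \<omega>"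
    and T: "\<omega> e1 e2 = 1" "\<omega> e1 e3 = 0" "\<omega> e1 e4 = 0" "\<omega> e2 e3 = 0" "\<omega> e2 e4 = 0" "\<omega> e3 e4 = 1"
  shows "tamed \<omega> tilt"
  unfolding tamed_def
proof (intro allI impI)
  fix x :: vec4 assume "x \<noteq> 0"
  hence "(c1 x * c1 x + c2 x * c2 x) + (c3 x * c3 x + c4 x * c4 x) > 0"
    unfolding frame_eq_0_iff
    by (metis add_pos_nonneg add_nonneg_pos sum_squares_ge_zero sum_squares_gt_zero_iff)
  moreover have "\<omega> x (tilt x) = (3/5) * ((c1 x * c1 x + c2 x * c2 x) + (c3 x * c3 x + c4 x * c4 x))"
    by (subst form2_frame_expand[OF f\<omega>]) (simp add: T algebra_simps)
  ultimately show "\<omega> x (tilt x) > 0" by simp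
qed

lemma induces_orientation_tilt:
  assumes m4: "form4 \<mu>" and m: "\<mu> e1 e2 e3 e4 > 0"
  shows "induces_orientation \<mu> tilt"
  unfolding induces_orientation_def
proof (intro exI conjI)
  have "u1 = 0 \<and> u2 = 0 \<and> u3 = 0 \<and> u4 = 0"
    if h: "u1 *\<^sub>R e1 + u2 *\<^sub>R tilt e1 + u3 *\<^sub>R e3 + u4 *\<^sub>R tilt e3 = 0" for u1 u2 u3 u4
  proof -
    have "c1 (u1 *\<^sub>R e1 + u2 *\<^sub>R tilt e1 + u3 *\<^sub>R e3 + u4 *\<^sub>R tilt e3) = 0"
      "c2 (u1 *\<^sub>R e1 + u2 *\<^sub>R tilt e1 + u3 *\<^sub>R e3 + u4 *\<^sub>R tilt e3) = 0"
      "c3 (u1 *\<^sub>R e1 + u2 *\<^sub>R tilt e1 + u3 *\<^sub>R e3 + u4 *\<^sub>R tilt e3) = 0"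
      "c4 (u1 *\<^sub>R e1 + u2 *\<^sub>R tilt e1 + u3 *\<^sub>R e3 + u4 *\<^sub>R tilt e3) = 0"
      unfolding h by simp_all
    thus ?thesis by simp
  qed
  thus "independent {e1, tilt e1, e3, tilt e3}" "card {e1, tilt e1, e3, tilt e3} = 4"
    using independent4I by blast+
  have lin: "\<mu> a (x + y) c d = \<mu> a x c d + \<mu> a y c d" "\<mu> a (k *\<^sub>R x) c d = k * \<mu> a x c d"
    "\<mu> a b c (x + y) = \<mu> a b c x + \<mu> a b c y" "\<mu> a b c (k *\<^sub>R x) = k * \<mu> a b c x"
    "\<mu> a (x - y) c d = \<mu> a x c d - \<mu> a y c d" "\<mu> a b c (x - y) = \<mu> a b c x - \<mu> a b c y"
    for a b c d x y k
    using linear_add[OF form4_linear(2)[OF m4, of a c d], of x y]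
      linear_scale[OF form4_linear(2)[OF m4, of a c d], of k x]
      linear_add[OF form4_linear(4)[OF m4, of a b c], of x y]
      linear_scale[OF form4_linear(4)[OF m4, of a b c], of k x]
      linear_diff[OF form4_linear(2)[OF m4, of a c d], of x y]
      linear_diff[OF form4_linear(4)[OF m4, of a b c], of x y]
    by simp_all
  have "\<mu> e1 (tilt e1) e3 (tilt e3) = (9/25) * \<mu> e1 e2 e3 e4"
    using m4 unfolding tilt_frame form4_def by (simp add: lin)
  thus "\<mu> e1 (tilt e1) e3 (tilt e3) > 0" using m by simp
qed

lemma compatible_tilt_separates:
  assumes fp: "form2 p" and cp: "compatible p tilt"
  shows "p e1 e3 \<noteq> p e2 e4"
proof
  assume e0: "p e1 e3 = p e2 e4"
  note Lp = form2_arith[OF fp] and asp = form2_antisym[OF fp]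
  have "p (tilt e1) (tilt e2) = p e1 e2" using cp unfolding compatible_def by blast
  hence "(9/25) * p e1 e2 + (12/25) * p e2 e4 - (12/25) * p e1 e3 - (16/25) * p e3 e4 = p e1 e2"
    unfolding tilt_frame using asp[of e2 e1] asp[of e3 e1] asp[of e3 e4] by (simp add: Lp algebra_simps)
  moreover have "e1 \<noteq> 0" "e4 \<noteq> 0" using frame_eq_0_iff by auto
  hence "p e1 (tilt e1) > 0" "p e4 (tilt e4) > 0" using cp unfolding compatible_def tamed_def by auto
  hence "(3/5) * p e1 e2 - (4/5) * p e1 e3 > 0" "(4/5) * p e2 e4 + (3/5) * p e3 e4 > 0"
    unfolding tilt_frame using asp[of e4 e2] asp[of e4 e3] by (simp_all add: Lp algebra_simps)
  ultimately show False using e0 by linarith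
qed

end

lemma contract_complex_structure:
  assumes m4: "form4 \<mu>" and sy: "symplectic br \<omega>" and c: "c > 0"
    and wed: "\<And>v1 v2 v3 v4. wedge22 \<omega> \<omega> v1 v2 v3 v4 = c * \<mu> v1 v2 v3 v4"
    and bd: "boundary2 br u" and Ph: "Phi \<mu> u u > 0"
  shows "\<exists>I \<kappa>. (\<forall>x. I (I x) = - x) \<and> \<kappa> > 0 \<and> (\<forall>x y. contract \<mu> u x y = \<kappa> * \<omega> (I x) y)"
proof -
  interpret std: frame4 "std 1" "std 2" "std 3" "std 4" "\<lambda>x. x$1" "\<lambda>x. x$2" "\<lambda>x. x$3" "\<lambda>x. x$4"
    by (rule std_frame)
  define m where "m = \<mu> (std 1) (std 2) (std 3) (std 4)"
  have f\<omega>: "form2 \<omega>" and cl: "closed2 br \<omega>" using sy unfolding symplectic_def by auto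
  have fw: "form2 (contract \<mu> u)" by (rule form2_contract[OF m4])
  have "m \<noteq> 0" using Ph std.Phi_frame_expand[OF m4, of u u] unfolding m_def by auto
  have "pair2 \<omega> u = 0" using bd f\<omega> cl unfolding boundary2_def by blast
  hence "wedge22 \<omega> (contract \<mu> u) (std 1) (std 2) (std 3) (std 4) = 0"
    using std.wedge_contract[OF m4 f\<omega>] by simp
  then obtain M where lM: "linear M"
    and \<omega>M: "\<And>x y. \<omega> (M x) y = (c * m) * contract \<mu> u x y"
    and MM: "\<And>x. M (M x) = - ((c * m) * (m * Phi \<mu> u u)) *\<^sub>R x"
    using pfaffian_adjoint_exists[OF f\<omega> fw]
    unfolding wed std.wedge_contract[OF m4 fw] pair2_contract m_def by blast
  have "m * m > 0" using \<open>m \<noteq> 0\<close> by (metis not_real_square_gt_zero)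
  hence "(c * m) * (m * Phi \<mu> u u) > 0"
    using mult_pos_pos[OF mult_pos_pos[OF c \<open>m * m > 0\<close>] Ph] by (simp add: algebra_simps)
  moreover have "c * m \<noteq> 0" using \<open>m \<noteq> 0\<close> c by simp
  ultimately show ?thesis using complex_structure_of_square[OF f\<omega> lM MM _ \<omega>M] by blast
qed

context frame4
begin

lemma pair2_darboux_boundary:
  assumes m4: "form4 \<mu>" and m: "\<mu> e1 e2 e3 e4 \<noteq> 0" and fp: "form2 p"
    and W: "contract \<mu> u e1 e2 = 0" "contract \<mu> u e1 e3 = - \<kappa>" "contract \<mu> u e1 e4 = 0"
      "contract \<mu> u e2 e3 = 0" "contract \<mu> u e2 e4 = \<kappa>" "contract \<mu> u e3 e4 = 0"
  shows "pair2 p u = \<kappa> / \<mu> e1 e2 e3 e4 * (p e2 e4 - p e1 e3)"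
proof -
  have "plucker c3 c4 u = 0" "plucker c2 c4 u = \<kappa> / \<mu> e1 e2 e3 e4" "plucker c2 c3 u = 0"
    "plucker c1 c4 u = 0" "plucker c1 c3 u = - \<kappa> / \<mu> e1 e2 e3 e4" "plucker c1 c2 u = 0"
    using W m unfolding contract_frame[OF m4] by (simp_all add: field_simps)
  then show ?thesis unfolding pair2_frame_expand[OF fp] using m by (simp add: field_simps)
qed

end

lemma Phi_nonpos_if_tame_compatible:
  assumes m4: "form4 \<mu>" and sy: "symplectic br \<omega>" and c: "c > 0"
    and wed: "\<And>v1 v2 v3 v4. wedge22 \<omega> \<omega> v1 v2 v3 v4 = c * \<mu> v1 v2 v3 v4"
    and TC: "tame_compatible br \<mu>" and bd: "boundary2 br u"
  shows "Phi \<mu> u u \<le> 0"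
proof (rule ccontr)
  assume "\<not> Phi \<mu> u u \<le> 0"
  then obtain I \<kappa> where "\<And>x. I (I x) = - x" "\<kappa> > 0"
    "\<And>x y. contract \<mu> u x y = \<kappa> * \<omega> (I x) y"
    using contract_complex_structure[OF m4 sy c wed bd] by auto
  moreover have f\<omega>: "form2 \<omega>" "nondegenerate2 \<omega>" using sy unfolding symplectic_def by auto
  ultimately obtain b1 b2 b3 b4 where
    T: "\<omega> b1 b2 = 1" "\<omega> b1 b3 = 0" "\<omega> b1 b4 = 0" "\<omega> b2 b3 = 0" "\<omega> b2 b4 = 0" "\<omega> b3 b4 = 1"
    and W: "contract \<mu> u b1 b2 = 0" "contract \<mu> u b1 b3 = - \<kappa>" "contract \<mu> u b1 b4 = 0"
      "contract \<mu> u b2 b3 = 0" "contract \<mu> u b2 b4 = \<kappa>" "contract \<mu> u b3 b4 = 0"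
    using darboux_basis_adapted[OF _ _ form2_contract[OF m4]] by metis
  obtain c1 c2 c3 c4 where "frame4 b1 b2 b3 b4 c1 c2 c3 c4" using darboux_frame[OF f\<omega>(1) T] by blast
  then interpret b: frame4 b1 b2 b3 b4 c1 c2 c3 c4 .
  have "c * \<mu> b1 b2 b3 b4 = 2" using wed[of b1 b2 b3 b4] T unfolding wedge22_def by simp
  hence mb: "\<mu> b1 b2 b3 b4 > 0" by (metis c zero_less_mult_pos zero_less_numeral)
  obtain p where sp: "symplectic br p" and cp: "compatible p b.tilt"
    using TC b.almost_complex_tilt b.induces_orientation_tilt[OF m4 mb] b.tamed_tilt[OF f\<omega>(1) T] sy
    unfolding tame_compatible_def by blast
  have fp: "form2 p" and "closed2 br p" using sp unfolding symplectic_def by auto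
  hence "pair2 p u = 0" using bd unfolding boundary2_def by blast
  hence "p b2 b4 = p b1 b3"
    using b.pair2_darboux_boundary[OF m4 _ fp W] mb \<open>\<kappa> > 0\<close> by simp
  thus False using b.compatible_tilt_separates[OF fp cp] by simp
qed

lemma subspace_convex_separation:
  fixes S T :: "'a::euclidean_space set"
  assumes S: "subspace S" and T: "convex T" "T \<noteq> {}" and ST: "S \<inter> T = {}"
  shows "\<exists>a. a \<noteq> 0 \<and> (\<forall>x\<in>S. inner a x = 0) \<and> (\<forall>x\<in>T. 0 \<le> inner a x)"
proof -
  have "S \<noteq> {}" using subspace_0[OF S] by blast
  then obtain a b where a: "a \<noteq> 0" and aS: "\<And>x. x \<in> S \<Longrightarrow> inner a x \<le> b"
    and aT: "\<And>x. x \<in> T \<Longrightarrow> b \<le> inner a x"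
    using separating_hyperplane_sets[OF subspace_imp_convex[OF S] T(1) _ T(2) ST] by blast
  have aS0: "inner a x = 0" if "x \<in> S" for x
  proof (rule ccontr)
    assume ne: "inner a x \<noteq> 0"
    define r where "r = (\<bar>b\<bar> + 1) / inner a x"
    have "inner a (r *\<^sub>R x) \<le> b" using aS subspace_scale[OF S that] by blast
    moreover have "inner a (r *\<^sub>R x) = \<bar>b\<bar> + 1" using ne unfolding r_def by simp
    ultimately show False by linarith
  qed
  have "0 \<le> b" using aS[OF subspace_0[OF S]] by simp
  then have "0 \<le> inner a x" if "x \<in> T" for x using aT[OF that] by linarith
  then show ?thesis using a aS0 by blast
qed

text \<open>\<open>A, B > 0, x\<^sup>2 + y\<^sup>2 < A B\<close> describes the positive definite Hermitian matrices
  \<open>[[A, x + i y], [x - i y, B]]\<close>: the frame coefficients of the tamed \<open>J\<close>-invariant forms.\<close>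

lemma psd_cone_dual_nonneg:
  fixes g1 g2 s t :: real
  assumes H: "\<And>A B x y. A > 0 \<Longrightarrow> B > 0 \<Longrightarrow> x * x + y * y < A * B \<Longrightarrow> 0 \<le> g1 * A + g2 * B + s * x + t * y"
  shows "g1 \<ge> 0"
proof (rule ccontr)
  assume "\<not> g1 \<ge> 0"
  hence n: "g1 < 0" by simp
  define A where "A = (\<bar>g2\<bar> + 1) / (- g1)"
  have A: "A > 0" unfolding A_def using n by (intro divide_pos_pos) auto
  have "g1 * A = - (\<bar>g2\<bar> + 1)" unfolding A_def using n by (simp add: field_simps)
  moreover have "0 \<le> g1 * A + g2 * 1 + s * 0 + t * 0" using H[OF A, of 1 0 0] A by simp
  ultimately show False by linarith
qed

lemma psd_cone_dual_disc:
  fixes g1 g2 s t :: real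
  assumes H: "\<And>A B x y. A > 0 \<Longrightarrow> B > 0 \<Longrightarrow> x * x + y * y < A * B \<Longrightarrow> 0 \<le> g1 * A + g2 * B + s * x + t * y"
    and g1: "g1 \<ge> 0" and g2: "g2 \<ge> 0"
  shows "s * s + t * t \<le> 4 * g1 * g2"
proof (rule ccontr)
  define N where "N = s * s + t * t"
  assume "\<not> s * s + t * t \<le> 4 * g1 * g2"
  hence NN: "N > 4 * g1 * g2" unfolding N_def by simp
  have N0: "N > 0" using NN g1 g2 by (smt (verit) mult_nonneg_nonneg)
  \<comment> \<open>test the functional at \<open>(A, 1, -k s, -k t)\<close>\<close>
  have test: "0 \<le> g1 * A + g2 - k * N" if "A > 0" "k * k * N < A" for A k
  proof -
    have "(- k * s) * (- k * s) + (- k * t) * (- k * t) < A * 1"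
      using that(2) unfolding N_def by (simp add: algebra_simps)
    from H[OF that(1) _ this] show ?thesis unfolding N_def by (simp add: algebra_simps)
  qed
  show False
  proof (cases "g1 = 0")
    case True
    define k where "k = (g2 + 1) / N"
    have "k * k * N \<ge> 0" using N0 by simp
    hence "0 \<le> g1 * (k * k * N + 1) + g2 - k * N" by (intro test) linarith+
    thus False using True N0 unfolding k_def by simp
  next
    case False
    hence gp: "g1 > 0" using g1 by simp
    define d where "d = (N - 4 * g1 * g2) / (8 * g1 * g1)"
    have d: "d > 0" unfolding d_def using NN gp by simp
    define k where "k = 1 / (2 * g1)"
    have "k * k * N \<ge> 0" using N0 by simp
    hence "0 \<le> g1 * (k * k * N + d) + g2 - k * N" using d by (intro test) linarith+
    also have "\<dots> = - (N - 4 * g1 * g2) / (8 * g1)"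
      unfolding d_def k_def using gp by (simp add: field_simps)
    finally show False using NN gp by (simp add: zero_le_divide_iff)
  qed
qed

lemma psd_cone_dual:
  fixes g1 g2 s t :: real
  assumes H: "\<And>A B x y. A > 0 \<Longrightarrow> B > 0 \<Longrightarrow> x * x + y * y < A * B \<Longrightarrow> 0 \<le> g1 * A + g2 * B + s * x + t * y"
  shows "g1 \<ge> 0" "g2 \<ge> 0" "s * s + t * t \<le> 4 * g1 * g2"
proof -
  show g1: "g1 \<ge> 0" by (rule psd_cone_dual_nonneg[OF H])
  have "0 \<le> g2 * A + g1 * B + s * x + t * y" if "A > 0" "B > 0" "x * x + y * y < A * B" for A B x y
    using H[of B A x y] that by (simp add: algebra_simps)
  then show g2: "g2 \<ge> 0" by (rule psd_cone_dual_nonneg)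
  show "s * s + t * t \<le> 4 * g1 * g2" by (rule psd_cone_dual_disc[OF H g1 g2])
qed

text \<open>The identity \<open>4 (g12 g34 - g13 g24 + g14 g23) = 4 g12 g34 - (g13 + g24)\<^sup>2 - (g14 - g23)\<^sup>2
  + (g13 - g24)\<^sup>2 + (g14 + g23)\<^sup>2\<close> reduces this to a sum of squares.\<close>
lemma dual_cone_pfaffian_nonpos:
  fixes g12 g13 g14 g23 g24 g34 :: real
  assumes "g12 * g34 - g13 * g24 + g14 * g23 \<le> 0"
    and "(g13 + g24) * (g13 + g24) + (g14 - g23) * (g14 - g23) \<le> 4 * g12 * g34"
  shows "g24 = g13" "g23 = - g14"
proof -
  have "(g13 - g24) * (g13 - g24) + (g14 + g23) * (g14 + g23) \<le> 0"
    using assms by (simp add: algebra_simps)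
  then show "g24 = g13" "g23 = - g14" by (simp_all add: sum_squares_le_zero_iff)
qed

lemma psd_cone_dual_strict:
  fixes g1 g2 s t A B x y :: real
  assumes g1: "g1 \<ge> 0" and g2: "g2 \<ge> 0" and st: "s * s + t * t \<le> 4 * g1 * g2"
    and A: "A > 0" and B: "B > 0" and xy: "x * x + y * y < A * B"
    and z: "g1 * A + g2 * B + s * x + t * y = 0"
  shows "g1 = 0 \<and> g2 = 0 \<and> s = 0 \<and> t = 0"
proof -
  have st0: "s = 0 \<and> t = 0"
  proof (rule ccontr)
    assume "\<not> (s = 0 \<and> t = 0)"
    hence N: "s * s + t * t > 0" by (metis add_nonneg_pos add_pos_nonneg not_real_square_gt_zero zero_le_square)
    have cs: "(s * x + t * y) * (s * x + t * y) \<le> (s * s + t * t) * (x * x + y * y)"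
      using zero_le_square[of "s * y - t * x"] by (simp add: algebra_simps power2_eq_square)
    have "(s * s + t * t) * (x * x + y * y) < (s * s + t * t) * (A * B)" using N xy by simp
    also have "\<dots> \<le> (4 * g1 * g2) * (A * B)" using st A B by (intro mult_right_mono) simp_all
    also have "\<dots> \<le> (g1 * A + g2 * B) * (g1 * A + g2 * B)"
      using zero_le_square[of "g1 * A - g2 * B"] by (simp add: algebra_simps power2_eq_square)
    also have "(g1 * A + g2 * B) = - (s * x + t * y)" using z by linarith
    finally have "(s * s + t * t) * (x * x + y * y) < (s * x + t * y) * (s * x + t * y)" by (simp add: algebra_simps)
    thus False using cs by linarith
  qed
  hence "g1 * A + g2 * B = 0" using z by simp
  moreover have "g1 * A \<ge> 0" "g2 * B \<ge> 0" using g1 g2 A B by simp_all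
  ultimately have "g1 * A = 0" "g2 * B = 0" by linarith+
  thus ?thesis using A B st0 by simp
qed

context frame4
begin

definition frame_coeffs :: "(vec4 \<Rightarrow> vec4 \<Rightarrow> real) \<Rightarrow> real \<times> real \<times> real \<times> real \<times> real \<times> real" where
  "frame_coeffs \<alpha> = (\<alpha> e1 e2, \<alpha> e1 e3, \<alpha> e1 e4, \<alpha> e2 e3, \<alpha> e2 e4, \<alpha> e3 e4)"

definition frame_bivector :: "real \<Rightarrow> real \<Rightarrow> real \<Rightarrow> real \<Rightarrow> real \<Rightarrow> real \<Rightarrow> twovec" where
  "frame_bivector g12 g13 g14 g23 g24 g34 =
     [(g12 *\<^sub>R e1, e2), (g13 *\<^sub>R e1, e3), (g14 *\<^sub>R e1, e4), (g23 *\<^sub>R e2, e3), (g24 *\<^sub>R e2, e4), (g34 *\<^sub>R e3, e4)]"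

lemma pair2_frame_bivector:
  assumes "form2 \<alpha>"
  shows "pair2 \<alpha> (frame_bivector g12 g13 g14 g23 g24 g34) = inner (g12, g13, g14, g23, g24, g34) (frame_coeffs \<alpha>)"
  unfolding frame_bivector_def frame_coeffs_def by (simp add: form2_arith[OF assms])

lemma plucker_frame_bivector:
  "plucker c1 c2 (frame_bivector g12 g13 g14 g23 g24 g34) = g12"
  "plucker c1 c3 (frame_bivector g12 g13 g14 g23 g24 g34) = g13"
  "plucker c1 c4 (frame_bivector g12 g13 g14 g23 g24 g34) = g14"
  "plucker c2 c3 (frame_bivector g12 g13 g14 g23 g24 g34) = g23"
  "plucker c2 c4 (frame_bivector g12 g13 g14 g23 g24 g34) = g24"
  "plucker c3 c4 (frame_bivector g12 g13 g14 g23 g24 g34) = g34"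
  unfolding frame_bivector_def by simp_all

end

locale complex_frame4 = frame4 +
  fixes J :: "vec4 \<Rightarrow> vec4"
  assumes J_linear: "linear J" and J_on_frame: "J e1 = e2" "J e2 = - e1" "J e3 = e4" "J e4 = - e3"
begin

lemma coord_J [simp]: "c1 (J x) = - c2 x" "c2 (J x) = c1 x" "c3 (J x) = - c4 x" "c4 (J x) = c3 x"
proof -
  have "J x = J (c1 x *\<^sub>R e1 + c2 x *\<^sub>R e2 + c3 x *\<^sub>R e3 + c4 x *\<^sub>R e4)" by (metis frame_decomp)
  also have "\<dots> = (- c2 x) *\<^sub>R e1 + c1 x *\<^sub>R e2 + (- c4 x) *\<^sub>R e3 + c3 x *\<^sub>R e4"
    using J_on_frame by (simp add: linear_add[OF J_linear] linear_scale[OF J_linear] algebra_simps)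
  finally have Jx: "J x = (- c2 x) *\<^sub>R e1 + c1 x *\<^sub>R e2 + (- c4 x) *\<^sub>R e3 + c3 x *\<^sub>R e4" .
  show "c1 (J x) = - c2 x" "c2 (J x) = c1 x" "c3 (J x) = - c4 x" "c4 (J x) = c3 x"
    unfolding Jx by simp_all
qed

lemma form2_J_quadratic:
  assumes "form2 p"
  shows "p x (J x) = p e1 e2 * (c1 x * c1 x + c2 x * c2 x) + p e3 e4 * (c3 x * c3 x + c4 x * c4 x)
    + (p e1 e3 + p e2 e4) * (c2 x * c3 x - c1 x * c4 x) + (p e1 e4 - p e2 e3) * (c1 x * c3 x + c2 x * c4 x)"
  by (subst form2_frame_expand[OF assms]) (simp add: algebra_simps)

text \<open>The \<open>J\<close>-invariant 2-forms are exactly those with frame coefficients \<open>(A, x, y, -y, x, B)\<close>.\<close>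
definition jform :: "real \<Rightarrow> real \<Rightarrow> real \<Rightarrow> real \<Rightarrow> vec4 \<Rightarrow> vec4 \<Rightarrow> real" where
  "jform A B x y X Y = A * (c1 X * c2 Y - c2 X * c1 Y) + x * (c1 X * c3 Y - c3 X * c1 Y)
     + y * (c1 X * c4 Y - c4 X * c1 Y) - y * (c2 X * c3 Y - c3 X * c2 Y)
     + x * (c2 X * c4 Y - c4 X * c2 Y) + B * (c3 X * c4 Y - c4 X * c3 Y)"

lemma form2_jform: "form2 (jform A B x y)"
  unfolding form2_def bilinear_def jform_def
  by (intro conjI allI linearI) (simp_all add: algebra_simps)

lemma jform_J_invariant: "jform A B x y (J X) (J Y) = jform A B x y X Y"
  unfolding jform_def by (simp add: algebra_simps)

lemma frame_coeffs_jform: "frame_coeffs (jform A B x y) = (A, x, y, - y, x, B)"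
  unfolding frame_coeffs_def jform_def by simp

lemma tamed_jform:
  assumes A: "A > 0" and B: "B > 0" and xy: "x * x + y * y < A * B"
  shows "tamed (jform A B x y) J"
  unfolding tamed_def
proof (intro allI impI)
  fix X :: vec4 assume X: "X \<noteq> 0"
  have sos: "A * jform A B x y X (J X) = (A * c1 X - x * c4 X + y * c3 X) * (A * c1 X - x * c4 X + y * c3 X)
      + (A * c2 X + x * c3 X + y * c4 X) * (A * c2 X + x * c3 X + y * c4 X)
      + (A * B - x * x - y * y) * (c3 X * c3 X + c4 X * c4 X)"
    unfolding jform_def by (simp add: algebra_simps)
  have "A * jform A B x y X (J X) > 0"
  proof (cases "c3 X = 0 \<and> c4 X = 0")
    case True
    hence "c1 X * c1 X + c2 X * c2 X > 0" using X unfolding frame_eq_0_iff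
      by (simp add: sum_squares_gt_zero_iff)
    hence "A * (A * (c1 X * c1 X + c2 X * c2 X)) > 0" using A by simp
    moreover have "jform A B x y X (J X) = A * (c1 X * c1 X + c2 X * c2 X)"
      using True unfolding jform_def by (simp add: algebra_simps)
    ultimately show ?thesis by simp
  next
    case False
    hence "(A * B - x * x - y * y) * (c3 X * c3 X + c4 X * c4 X) > 0"
      using xy by (simp add: sum_squares_gt_zero_iff)
    thus ?thesis unfolding sos
      by (metis add_nonneg_pos zero_le_square power2_eq_square add_nonneg_nonneg)
  qed
  then show "jform A B x y X (J X) > 0" using A by (metis zero_less_mult_pos)
qed

lemma tamed_frame_coeffs:
  assumes f\<omega>: "form2 \<omega>" and tm: "tamed \<omega> J"
  defines "x \<equiv> (\<omega> e1 e3 + \<omega> e2 e4) / 2" and "y \<equiv> (\<omega> e1 e4 - \<omega> e2 e3) / 2"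
  shows "\<omega> e1 e2 > 0" "\<omega> e3 e4 > 0" "x * x + y * y < \<omega> e1 e2 * \<omega> e3 e4"
proof -
  have Q: "\<omega> X (J X) = \<omega> e1 e2 * (c1 X * c1 X + c2 X * c2 X) + \<omega> e3 e4 * (c3 X * c3 X + c4 X * c4 X)
      + 2 * x * (c2 X * c3 X - c1 X * c4 X) + 2 * y * (c1 X * c3 X + c2 X * c4 X)" for X
    unfolding form2_J_quadratic[OF f\<omega>] x_def y_def by (simp add: field_simps)
  have pos: "\<omega> X (J X) > 0" if "c1 X \<noteq> 0 \<or> c3 X \<noteq> 0" for X
    using tm that unfolding tamed_def frame_eq_0_iff by blast
  show A: "\<omega> e1 e2 > 0" using pos[of e1] Q[of e1] by simp
  show B: "\<omega> e3 e4 > 0" using pos[of e3] Q[of e3] by simp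
  \<comment> \<open>at the vector with coordinates \<open>(B, 0, -y, x)\<close>, \<open>\<omega>(X, J X) = B (A B - x\<^sup>2 - y\<^sup>2)\<close>\<close>
  define X where "X = \<omega> e3 e4 *\<^sub>R e1 + (- y) *\<^sub>R e3 + x *\<^sub>R e4"
  have "\<omega> X (J X) > 0" using pos[of X] B unfolding X_def by simp
  hence "\<omega> e3 e4 * (\<omega> e1 e2 * \<omega> e3 e4 - x * x - y * y) > 0"
    unfolding Q X_def by (simp add: algebra_simps)
  thus "x * x + y * y < \<omega> e1 e2 * \<omega> e3 e4" using B by (simp add: zero_less_mult_iff)
qed

end

definition closed_forms :: "(vec4 \<Rightarrow> vec4 \<Rightarrow> vec4) \<Rightarrow> (vec4 \<Rightarrow> vec4 \<Rightarrow> real) set" where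
  "closed_forms br = {\<alpha>. form2 \<alpha> \<and> closed2 br \<alpha>}"

definition compatible_forms :: "(vec4 \<Rightarrow> vec4) \<Rightarrow> (vec4 \<Rightarrow> vec4 \<Rightarrow> real) set" where
  "compatible_forms J = {\<alpha>. form2 \<alpha> \<and> compatible \<alpha> J}"

lemma closed_forms_lincomb:
  assumes "\<alpha> \<in> closed_forms br" "\<beta> \<in> closed_forms br"
  shows "(\<lambda>x y. s * \<alpha> x y + t * \<beta> x y) \<in> closed_forms br"
  using assms form2_lincomb[of \<alpha> \<beta> s t] closed2_lincomb[of br \<alpha> \<beta> s t]
  unfolding closed_forms_def by simp

lemma compatible_forms_convex_comb:
  assumes "\<alpha> \<in> compatible_forms J" "\<beta> \<in> compatible_forms J" "0 \<le> s" "0 \<le> t" "s + t = 1"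
  shows "(\<lambda>x y. s * \<alpha> x y + t * \<beta> x y) \<in> compatible_forms J"
proof -
  have "s * \<alpha> x (J x) + t * \<beta> x (J x) > 0" if "x \<noteq> 0" for x
  proof -
    have "\<alpha> x (J x) > 0" "\<beta> x (J x) > 0"
      using assms(1,2) that unfolding compatible_forms_def compatible_def tamed_def by auto
    thus ?thesis using assms(3-5) by (cases "s = 0") (auto intro: add_pos_nonneg)
  qed
  then show ?thesis
    using assms(1,2) form2_lincomb[of \<alpha> \<beta> s t]
    unfolding compatible_forms_def compatible_def tamed_def by simp
qed

lemma closed_compatible_forms_disjoint:
  assumes "\<not> (\<exists>\<omega>. symplectic br \<omega> \<and> compatible \<omega> J)"
  shows "closed_forms br \<inter> compatible_forms J = {}"
proof (rule ccontr)
  assume "closed_forms br \<inter> compatible_forms J \<noteq> {}"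
  then obtain \<alpha> where "form2 \<alpha>" "closed2 br \<alpha>" "compatible \<alpha> J"
    unfolding closed_forms_def compatible_forms_def by blast
  moreover have "nondegenerate2 \<alpha>"
    using \<open>compatible \<alpha> J\<close> nondegenerate2_if_tamed unfolding compatible_def by blast
  ultimately show False using assms unfolding symplectic_def by blast
qed

context frame4
begin

lemma frame_coeffs_lincomb:
  "frame_coeffs (\<lambda>x y. s * \<alpha> x y + t * \<beta> x y) = s *\<^sub>R frame_coeffs \<alpha> + t *\<^sub>R frame_coeffs \<beta>"
  unfolding frame_coeffs_def by simp

lemma subspace_frame_coeffs_closed_forms: "subspace (frame_coeffs ` closed_forms br)"
  unfolding subspace_def
proof (intro conjI ballI allI)
  have "(\<lambda>x y. 0) \<in> closed_forms br"
    unfolding closed_forms_def closed2_def d2_def using form2_zero by simp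
  moreover have "frame_coeffs (\<lambda>x y. 0) = 0" unfolding frame_coeffs_def by (simp add: zero_prod_def)
  ultimately show "0 \<in> frame_coeffs ` closed_forms br" by (metis image_eqI)
next
  fix a b assume "a \<in> frame_coeffs ` closed_forms br" "b \<in> frame_coeffs ` closed_forms br"
  then obtain \<alpha> \<beta> where "\<alpha> \<in> closed_forms br" "\<beta> \<in> closed_forms br"
    "a = frame_coeffs \<alpha>" "b = frame_coeffs \<beta>" by auto
  then show "a + b \<in> frame_coeffs ` closed_forms br"
    using closed_forms_lincomb[of \<alpha> br \<beta> 1 1] frame_coeffs_lincomb[of 1 \<alpha> 1 \<beta>]
    by (simp add: rev_image_eqI)
next
  fix c a assume "a \<in> frame_coeffs ` closed_forms br"
  then obtain \<alpha> where "\<alpha> \<in> closed_forms br" "a = frame_coeffs \<alpha>" by auto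
  then show "c *\<^sub>R a \<in> frame_coeffs ` closed_forms br"
    using closed_forms_lincomb[of \<alpha> br \<alpha> c 0] frame_coeffs_lincomb[of c \<alpha> 0 \<alpha>]
    by (simp add: rev_image_eqI)
qed

lemma convex_frame_coeffs_compatible_forms: "convex (frame_coeffs ` compatible_forms J)"
proof (rule convexI)
  fix a b and s t :: real
  assume "a \<in> frame_coeffs ` compatible_forms J" "b \<in> frame_coeffs ` compatible_forms J"
    and st: "0 \<le> s" "0 \<le> t" "s + t = 1"
  then obtain \<alpha> \<beta> where ab: "\<alpha> \<in> compatible_forms J" "\<beta> \<in> compatible_forms J"
    "a = frame_coeffs \<alpha>" "b = frame_coeffs \<beta>" by auto
  have "(\<lambda>x y. s * \<alpha> x y + t * \<beta> x y) \<in> compatible_forms J"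
    using compatible_forms_convex_comb[OF ab(1,2) st] .
  then show "s *\<^sub>R a + t *\<^sub>R b \<in> frame_coeffs ` compatible_forms J"
    unfolding ab(3,4) frame_coeffs_lincomb[symmetric] by (rule imageI)
qed

lemma frame_coeffs_disjoint:
  assumes "closed_forms br \<inter> compatible_forms J = {}"
  shows "frame_coeffs ` closed_forms br \<inter> frame_coeffs ` compatible_forms J = {}"
proof -
  have "\<alpha> = \<beta>" if "\<alpha> \<in> closed_forms br" "\<beta> \<in> compatible_forms J"
    "frame_coeffs \<alpha> = frame_coeffs \<beta>" for \<alpha> \<beta>
    using that unfolding closed_forms_def compatible_forms_def frame_coeffs_def
    by (intro form2_frame_eqI) auto
  then show ?thesis using assms by blast
qed

end

context complex_frame4
begin

lemma jform_compatible:
  assumes "A > 0" "B > 0" "x * x + y * y < A * B"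
  shows "jform A B x y \<in> compatible_forms J"
  unfolding compatible_forms_def compatible_def
  using form2_jform jform_J_invariant tamed_jform[OF assms] by simp

lemma boundary_separating_compatible:
  assumes nc: "\<not> (\<exists>\<omega>. symplectic br \<omega> \<and> compatible \<omega> J)"
  shows "\<exists>g12 g13 g14 g23 g24 g34. (g12, g13, g14, g23, g24, g34) \<noteq> 0
    \<and> boundary2 br (frame_bivector g12 g13 g14 g23 g24 g34)
    \<and> (\<forall>A B x y. A > 0 \<longrightarrow> B > 0 \<longrightarrow> x * x + y * y < A * B \<longrightarrow>
         0 \<le> g12 * A + g34 * B + (g13 + g24) * x + (g14 - g23) * y)"
proof -
  have "frame_coeffs ` compatible_forms J \<noteq> {}" using jform_compatible[of 1 1 0 0] by auto
  then have "\<exists>a. a \<noteq> 0 \<and> (\<forall>v\<in>frame_coeffs ` closed_forms br. inner a v = 0)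
      \<and> (\<forall>v\<in>frame_coeffs ` compatible_forms J. 0 \<le> inner a v)"
    using subspace_convex_separation[OF subspace_frame_coeffs_closed_forms
        convex_frame_coeffs_compatible_forms _ frame_coeffs_disjoint]
      closed_compatible_forms_disjoint[OF nc] by blast
  then obtain g12 g13 g14 g23 g24 g34 where g: "(g12, g13, g14, g23, g24, g34) \<noteq> 0"
    and closed: "\<And>\<alpha>. \<alpha> \<in> closed_forms br \<Longrightarrow> inner (g12, g13, g14, g23, g24, g34) (frame_coeffs \<alpha>) = 0"
    and compat: "\<And>\<alpha>. \<alpha> \<in> compatible_forms J \<Longrightarrow> 0 \<le> inner (g12, g13, g14, g23, g24, g34) (frame_coeffs \<alpha>)"
    by auto
  have "boundary2 br (frame_bivector g12 g13 g14 g23 g24 g34)"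
    unfolding boundary2_def using closed pair2_frame_bivector unfolding closed_forms_def by simp
  moreover have "0 \<le> g12 * A + g34 * B + (g13 + g24) * x + (g14 - g23) * y"
    if "A > 0" "B > 0" "x * x + y * y < A * B" for A B x y
    using compat[OF jform_compatible[OF that]] unfolding frame_coeffs_jform by (simp add: algebra_simps)
  ultimately show ?thesis using g by blast
qed

end

lemma compatible_if_Phi_nonpos:
  assumes m4: "form4 \<mu>" and N: "\<forall>u. boundary2 br u \<longrightarrow> Phi \<mu> u u \<le> 0"
    and J: "almost_complex J" "induces_orientation \<mu> J" and sy: "symplectic br \<omega>" and tm: "tamed \<omega> J"
  shows "\<exists>\<omega>'. symplectic br \<omega>' \<and> compatible \<omega>' J"
proof (rule ccontr)
  assume nc: "\<not> ?thesis"
  obtain e1 e3 where ind: "independent {e1, J e1, e3, J e3}" "card {e1, J e1, e3, J e3} = 4"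
    and m: "\<mu> e1 (J e1) e3 (J e3) > 0"
    using J(2) unfolding induces_orientation_def by blast
  obtain c1 c2 c3 c4 where "frame4 e1 (J e1) e3 (J e3) c1 c2 c3 c4"
    using independent_imp_frame4[OF ind] by blast
  moreover have "linear J" "\<And>x. J (J x) = - x" using J(1) unfolding almost_complex_def by auto
  ultimately interpret complex_frame4 e1 "J e1" e3 "J e3" c1 c2 c3 c4 J
    by (simp add: complex_frame4_def complex_frame4_axioms_def)
  obtain g12 g13 g14 g23 g24 g34 where g: "(g12, g13, g14, g23, g24, g34) \<noteq> 0"
    and bd: "boundary2 br (frame_bivector g12 g13 g14 g23 g24 g34)" (is "boundary2 br ?u")
    and cone: "\<And>A B x y. A > 0 \<Longrightarrow> B > 0 \<Longrightarrow> x * x + y * y < A * B \<Longrightarrow>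
       0 \<le> g12 * A + g34 * B + (g13 + g24) * x + (g14 - g23) * y"
    using boundary_separating_compatible[OF nc] by blast
  have dual: "0 \<le> g12" "0 \<le> g34"
    "(g13 + g24) * (g13 + g24) + (g14 - g23) * (g14 - g23) \<le> 4 * g12 * g34"
    using psd_cone_dual[of g12 g34 "g13 + g24" "g14 - g23", OF cone] by simp_all
  have "Phi \<mu> ?u ?u = (2 * \<mu> e1 (J e1) e3 (J e3)) * (g12 * g34 - g13 * g24 + g14 * g23)"
    unfolding Phi_frame_expand[OF m4] plucker_frame_bivector by (simp add: algebra_simps)
  moreover have "Phi \<mu> ?u ?u \<le> 0" using N bd by blast
  ultimately have "g12 * g34 - g13 * g24 + g14 * g23 \<le> 0"
    using m by (simp add: mult_le_0_iff)
  from dual_cone_pfaffian_nonpos[OF this dual(3)] have g24: "g24 = g13" and g23: "g23 = - g14" .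
  have f\<omega>: "form2 \<omega>" and "closed2 br \<omega>" using sy unfolding symplectic_def by auto
  hence "pair2 \<omega> ?u = 0" using bd unfolding boundary2_def by blast
  hence "g12 * \<omega> e1 (J e1) + g34 * \<omega> e3 (J e3) + (g13 + g24) * ((\<omega> e1 e3 + \<omega> (J e1) (J e3)) / 2)
      + (g14 - g23) * ((\<omega> e1 (J e3) - \<omega> (J e1) e3) / 2) = 0"
    unfolding pair2_frame_bivector[OF f\<omega>] frame_coeffs_def g24 g23 by (simp add: field_simps)
  from psd_cone_dual_strict[OF dual tamed_frame_coeffs[OF f\<omega> tm] this]
  have "g12 = 0" "g34 = 0" "g13 + g24 = 0" "g14 - g23 = 0" by auto
  thus False using g g24 g23 by (simp add: zero_prod_def)
qed

theorem theorem1: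
  fixes br :: "real^4 \<Rightarrow> real^4 \<Rightarrow> real^4"
    and \<mu> :: "real^4 \<Rightarrow> real^4 \<Rightarrow> real^4 \<Rightarrow> real^4 \<Rightarrow> real"
  assumes "lie_bracket br"
    and "volume_form \<mu>"
    and "\<exists>\<omega>. positively_oriented_symplectic br \<mu> \<omega>"
  shows "tame_compatible br \<mu> \<longleftrightarrow> (\<forall>u. boundary2 br u \<longrightarrow> Phi \<mu> u u \<le> 0)"
proof -
  have m4: "form4 \<mu>" using assms(2) unfolding volume_form_def by simp
  obtain \<omega> c where sy: "symplectic br \<omega>" and c: "c > 0"
    and wed: "\<And>v1 v2 v3 v4. wedge22 \<omega> \<omega> v1 v2 v3 v4 = c * \<mu> v1 v2 v3 v4"
    using assms(3) unfolding positively_oriented_symplectic_def by blast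
  show ?thesis
  proof
    assume "tame_compatible br \<mu>"
    then show "\<forall>u. boundary2 br u \<longrightarrow> Phi \<mu> u u \<le> 0"
      using Phi_nonpos_if_tame_compatible[OF m4 sy c wed] by blast
  next
    assume "\<forall>u. boundary2 br u \<longrightarrow> Phi \<mu> u u \<le> 0"
    then show "tame_compatible br \<mu>"
      unfolding tame_compatible_def using compatible_if_Phi_nonpos[OF m4] by blast
  qed
qed

end
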